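(* Let $\mathcal{A}$ be a line arrangement in $\mathbb{P}^2_{\mathbb{C}}$ with $|\mathcal{A}|=7$. Then $\mathcal{A}$ is of class $\mathcal{C}_{\le 3}$ of simple type.
   Context: $\operatorname{mult}(\mathcal{A})$ is the set of points on at least three lines of $\mathcal{A}$. $\mathcal{A}$ is of type $\mathcal{C}_k$ if $k$ is the minimal number of lines of $\mathcal{A}$ whose union contains $\operatorname{mult}(\mathcal{A})$. "$\mathcal{C}_{\le 3}$ of simple type" means of type $\mathcal{C}_0,\mathcal{C}_1,\mathcal{C}_2$, or of type $\mathcal{C}_3$ such that there exist $H_1,H_2,H_3\in\mathcal{A}$ with $\operatorname{mult}(\mathcal{A})\subset H_1\cup H_2\cup H_3$ and either (i) $H_1\cap H_2\cap H_3=\emptyset$ and exactly one multiple point lies on $H_1\setminus(H_2\cup H_3)$, or (ii) $H_1\cap H_2\cap H_3\ne\emptyset$. *)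

theory Defs
  imports "HOL-Analysis.Analysis"
begin

text \<open>The complex projective plane: a point is a one-dimensional subspace of
  complex^3, represented as the set of its vectors (the span of a nonzero vector).\<close>

definition proj_points :: "(complex^3) set set" where
  "proj_points = {{c *s v | c. True} | v. v \<noteq> 0}"

definition pair3 :: "complex^3 \<Rightarrow> complex^3 \<Rightarrow> complex" where
  "pair3 a x = (\<Sum>i\<in>UNIV. a $ i * x $ i)"

definition proj_line :: "complex^3 \<Rightarrow> (complex^3) set set" where
  "proj_line a = {P \<in> proj_points. \<forall>x\<in>P. pair3 a x = 0}"

definition is_proj_line :: "(complex^3) set set \<Rightarrow> bool" where
  "is_proj_line L \<longleftrightarrow> (\<exists>a. a \<noteq> 0 \<and> L = proj_line a)"

definition line_arrangement :: "(complex^3) set set set \<Rightarrow> bool" where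
  "line_arrangement A \<longleftrightarrow> finite A \<and> (\<forall>L\<in>A. is_proj_line L)"

definition mult_pts :: "(complex^3) set set set \<Rightarrow> (complex^3) set set" where
  "mult_pts A = {P \<in> proj_points. card {H \<in> A. P \<in> H} \<ge> 3}"

text \<open>A is of type C_k: k is the minimal number of lines of A whose union contains mult(A).\<close>
definition arr_type :: "(complex^3) set set set \<Rightarrow> nat" where
  "arr_type A = (LEAST k. \<exists>B \<subseteq> A. card B = k \<and> mult_pts A \<subseteq> \<Union>B)"

definition C_le3_simple :: "(complex^3) set set set \<Rightarrow> bool" where
  "C_le3_simple A \<longleftrightarrow>
     arr_type A \<le> 2 \<or>
     (arr_type A = 3 \<and>
      (\<exists>H1\<in>A. \<exists>H2\<in>A. \<exists>H3\<in>A. H1 \<noteq> H2 \<and> H1 \<noteq> H3 \<and> H2 \<noteq> H3 \<and>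
         mult_pts A \<subseteq> H1 \<union> H2 \<union> H3 \<and>
         ((H1 \<inter> H2 \<inter> H3 = {} \<and> card (mult_pts A \<inter> (H1 - (H2 \<union> H3))) = 1)
          \<or> H1 \<inter> H2 \<inter> H3 \<noteq> {})))"

end

theory Submission
  imports Defs
begin

(* The only geometric input is that two distinct projective lines meet in at most one point;
   it is proved first, via cross products in complex^3.  Everything else is combinatorics of a
   finite family of seven sets pairwise meeting in at most one point (locale linear_family).
   Choose a multiple point P of maximal multiplicity r >= 3; its pencil has r lines and the
   other 7 - r lines form the rest.  Every other multiple point lies on at least two lines of
   the rest.
   - If every multiple point lies on the pencil, at most three pencil lines carry multiple
     points besides P (for r >= 4 the rest has at most three lines, hence three pairs), so three
     concurrent lines through P cover mult(A): configuration (ii).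
   - Otherwise some multiple point Q is off the pencil; its (at most r) lines all lie in the
     rest, leaving at most one further line l.  Without l, mult(A) = {P, Q} and the type is
     at most 2; with l, every other multiple point lies on l and configuration (i) arises. *)

lemma pair3_expand: "pair3 a x = a$1 * x$1 + a$2 * x$2 + a$3 * x$3"
  by (simp add: pair3_def sum_3)

(* The cross product on complex^3; it is used to produce the common normal of two points. *)
definition cross3 :: "complex^3 \<Rightarrow> complex^3 \<Rightarrow> complex^3" where
  "cross3 v w = vector [v$2 * w$3 - v$3 * w$2, v$3 * w$1 - v$1 * w$3, v$1 * w$2 - v$2 * w$1]"

lemma cross3_antisym: "cross3 w v = - cross3 v w"
  by (simp add: cross3_def vec_eq_iff forall_3)

lemma cross3_cross3: "cross3 p (cross3 v w) = pair3 p w *s v - pair3 p v *s w"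
  by (simp add: cross3_def pair3_expand vec_eq_iff forall_3 algebra_simps)

lemma cross3_eq_0_proportional:
  assumes "v \<noteq> 0" and "cross3 v w = 0"
  shows "\<exists>k. w = k *s v"
proof -
  have eqs: "v$2 * w$3 = v$3 * w$2" "v$3 * w$1 = v$1 * w$3" "v$1 * w$2 = v$2 * w$1"
    using assms(2) by (simp_all add: cross3_def vec_eq_iff forall_3)
  obtain i where i: "v$i \<noteq> 0" using assms(1) by (auto simp: vec_eq_iff)
  have "w = (w$i / v$i) *s v"
    using i eqs exhaust_3[of i] by (auto simp: vec_eq_iff forall_3 field_simps)
  then show ?thesis by blast
qed

(* Two linear forms vanishing at two non-proportional vectors are proportional:
   both are multiples of the cross product of the two vectors. *)
lemma common_annihilator_proportional:
  assumes "pair3 a v = 0" "pair3 a w = 0" "pair3 b v = 0" "pair3 b w = 0"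
    and "b \<noteq> 0" "v \<noteq> 0" and not_prop: "\<nexists>k. w = k *s v"
  shows "\<exists>c. a = c *s b"
proof -
  define n where "n = cross3 v w"
  have "n \<noteq> 0" using cross3_eq_0_proportional[OF \<open>v \<noteq> 0\<close>] not_prop by (auto simp: n_def)
  have "cross3 a n = 0" "cross3 b n = 0"
    using assms(1-4) by (simp_all add: n_def cross3_cross3)
  then have "cross3 n a = 0" "cross3 n b = 0"
    using cross3_antisym[of a n] cross3_antisym[of b n] by simp_all
  then obtain \<alpha> \<beta> where "a = \<alpha> *s n" "b = \<beta> *s n"
    using cross3_eq_0_proportional[OF \<open>n \<noteq> 0\<close>] by metis
  moreover have "\<beta> \<noteq> 0" using \<open>b \<noteq> 0\<close> \<open>b = \<beta> *s n\<close> by auto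
  ultimately have "a = (\<alpha> / \<beta>) *s b" by simp
  then show ?thesis by blast
qed

definition point_of :: "complex^3 \<Rightarrow> (complex^3) set" where
  "point_of v = {c *s v | c. True}"

lemma proj_pointE:
  assumes "X \<in> proj_points"
  obtains v where "v \<noteq> 0" "X = point_of v" "v \<in> X"
proof -
  obtain v where "v \<noteq> 0" "X = point_of v" using assms by (auto simp: proj_points_def point_of_def)
  moreover have "v \<in> point_of v" by (auto simp: point_of_def intro: exI[of _ 1])
  ultimately show thesis using that by blast
qed

lemma point_of_proportional:
  assumes "w = k *s v" "w \<noteq> 0"
  shows "point_of w = point_of v"
proof -
  have "k \<noteq> 0" using assms by auto
  have "c *s w = (c * k) *s v" for c using assms(1) by simp
  moreover have "c *s v = (c / k) *s w" for c
    using \<open>k \<noteq> 0\<close> assms(1) by simp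
  ultimately show ?thesis unfolding point_of_def by blast
qed

lemma proj_line_smult:
  assumes "c \<noteq> 0"
  shows "proj_line (c *s b) = proj_line b"
proof -
  have "pair3 (c *s b) x = c * pair3 b x" for x by (simp add: pair3_expand algebra_simps)
  then show ?thesis using assms by (simp add: proj_line_def)
qed

lemma proj_lines_meet_once:
  assumes "is_proj_line L1" "is_proj_line L2" "L1 \<noteq> L2"
    and "X \<in> L1" "X \<in> L2" "Y \<in> L1" "Y \<in> L2"
  shows "X = Y"
proof -
  obtain a b where a: "a \<noteq> 0" "L1 = proj_line a" and b: "b \<noteq> 0" "L2 = proj_line b"
    using assms(1,2) by (auto simp: is_proj_line_def)
  have "X \<in> proj_points" "Y \<in> proj_points" using assms(4,6) a by (auto simp: proj_line_def)
  then obtain v w where v: "v \<noteq> 0" "X = point_of v" "v \<in> X"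
    and w: "w \<noteq> 0" "Y = point_of w" "w \<in> Y" by (metis proj_pointE)
  have incid: "pair3 a v = 0" "pair3 a w = 0" "pair3 b v = 0" "pair3 b w = 0"
    using assms(4-7) v(3) w(3) a(2) b(2) by (auto simp: proj_line_def)
  show ?thesis
  proof (cases "\<exists>k. w = k *s v")
    case True
    then show ?thesis using point_of_proportional v(2) w(1,2) by blast
  next
    case False
    then obtain c where "a = c *s b"
      using common_annihilator_proportional[OF incid b(1) v(1)] by blast
    moreover have "c \<noteq> 0" using \<open>a = c *s b\<close> a(1) by auto
    ultimately have "L1 = L2" using a(2) b(2) proj_line_smult by simp
    with assms(3) show ?thesis by simp
  qed
qed

definition lines_through :: "(complex^3) set set set \<Rightarrow> (complex^3) set \<Rightarrow> (complex^3) set set set" where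
  "lines_through A X = {H \<in> A. X \<in> H}"

lemma mult_pts_lines_through: "X \<in> mult_pts A \<Longrightarrow> 3 \<le> card (lines_through A X)"
  by (simp add: mult_pts_def lines_through_def)

lemma arr_type_le_card: "B \<subseteq> A \<Longrightarrow> mult_pts A \<subseteq> \<Union>B \<Longrightarrow> arr_type A \<le> card B"
  unfolding arr_type_def by (rule Least_le) auto

lemma C_le3_simpleI:
  assumes "H1 \<in> A" "H2 \<in> A" "H3 \<in> A" "H1 \<noteq> H2" "H1 \<noteq> H3" "H2 \<noteq> H3"
    and "mult_pts A \<subseteq> H1 \<union> H2 \<union> H3"
    and "(H1 \<inter> H2 \<inter> H3 = {} \<and> card (mult_pts A \<inter> (H1 - (H2 \<union> H3))) = 1)
          \<or> H1 \<inter> H2 \<inter> H3 \<noteq> {}"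
  shows "C_le3_simple A"
proof -
  have "arr_type A \<le> card {H1, H2, H3}" using assms by (intro arr_type_le_card) auto
  also have "\<dots> = 3" using assms by simp
  finally show ?thesis unfolding C_le3_simple_def using assms by force
qed

lemma exists_max_mult_point:
  assumes "finite A" "mult_pts A \<noteq> {}"
  obtains P where "P \<in> mult_pts A"
    "\<And>X. X \<in> mult_pts A \<Longrightarrow> card (lines_through A X) \<le> card (lines_through A P)"
proof -
  obtain P0 where "P0 \<in> mult_pts A" using assms(2) by blast
  moreover have "card (lines_through A X) < Suc (card A)" for X
    using card_mono[OF assms(1)] by (simp add: lines_through_def le_imp_less_Suc)
  ultimately show thesis using that
    ex_has_greatest_nat[of "\<lambda>X. X \<in> mult_pts A" P0 "\<lambda>X. card (lines_through A X)" "Suc (card A)"]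
    by blast
qed

lemma card_le_by_witnesses:
  assumes "finite T" and "\<And>x. x \<in> S \<Longrightarrow> \<exists>y\<in>T. r x y"
    and "\<And>x x' y. x \<in> S \<Longrightarrow> x' \<in> S \<Longrightarrow> y \<in> T \<Longrightarrow> r x y \<Longrightarrow> r x' y \<Longrightarrow> x = x'"
  shows "finite S" "card S \<le> card T"
proof -
  obtain f where f: "\<And>x. x \<in> S \<Longrightarrow> f x \<in> T \<and> r x (f x)" using assms(2) by metis
  have "inj_on f S" using f assms(3) by (intro inj_onI) metis
  moreover have "f ` S \<subseteq> T" using f by blast
  ultimately show "finite S" "card S \<le> card T"
    using assms(1) inj_on_finite card_inj_on_le by blast+
qed

(* A finite family of point sets in which two distinct members meet in at most one point;
   a projective line arrangement is such a family. *)
locale linear_family =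
  fixes A :: "(complex^3) set set set"
  assumes finite_A: "finite A"
    and meet_once: "\<And>L1 L2 X Y. L1 \<in> A \<Longrightarrow> L2 \<in> A \<Longrightarrow> L1 \<noteq> L2 \<Longrightarrow>
      X \<in> L1 \<Longrightarrow> X \<in> L2 \<Longrightarrow> Y \<in> L1 \<Longrightarrow> Y \<in> L2 \<Longrightarrow> X = Y"
begin

lemma finite_lines_through: "finite (lines_through A X)"
  using finite_A by (simp add: lines_through_def)

lemma card_common_lines:
  assumes "X \<noteq> Y"
  shows "card (lines_through A X \<inter> lines_through A Y) \<le> 1"
proof -
  have "L1 = L2" if "L1 \<in> lines_through A X \<inter> lines_through A Y"
    "L2 \<in> lines_through A X \<inter> lines_through A Y" for L1 L2
    using that meet_once[of L1 L2 X Y] assms by (auto simp: lines_through_def)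
  then show ?thesis using finite_lines_through by (simp add: card_le_Suc0_iff_eq)
qed

lemma card_lines_avoiding:
  assumes "X \<noteq> Y"
  shows "card (lines_through A X) \<le> card (lines_through A X - lines_through A Y) + 1"
proof -
  have "lines_through A X = (lines_through A X - lines_through A Y) \<union>
      (lines_through A X \<inter> lines_through A Y)" by blast
  then have "card (lines_through A X) \<le>
      card (lines_through A X - lines_through A Y) + card (lines_through A X \<inter> lines_through A Y)"
    by (metis card_Un_le)
  then show ?thesis using card_common_lines[OF assms] by linarith
qed

lemma avoid_common_point:
  assumes "K1 \<in> lines_through A Q" "K2 \<in> lines_through A Q" "K1 \<noteq> K2"
    and "L1 \<in> A" "L2 \<in> A" "L1 \<noteq> L2" "Q \<notin> L2"
  shows "L1 \<inter> L2 \<inter> K1 = {} \<or> L1 \<inter> L2 \<inter> K2 = {}"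
proof (rule ccontr)
  assume "\<not> ?thesis"
  then obtain X1 X2 where X1: "X1 \<in> L1 \<inter> L2 \<inter> K1" and X2: "X2 \<in> L1 \<inter> L2 \<inter> K2" by blast
  then have "X1 = X2" using meet_once[OF assms(4-6)] by blast
  then have "X1 = Q" using X1 X2 assms(1-3) meet_once[of K1 K2 X1 Q] by (auto simp: lines_through_def)
  with X1 assms(7) show False by blast
qed

end

locale seven_lines = linear_family +
  fixes P :: "(complex^3) set"
  assumes card_A: "card A = 7"
    and P_mult: "P \<in> mult_pts A"
    and P_max: "\<And>X. X \<in> mult_pts A \<Longrightarrow> card (lines_through A X) \<le> card (lines_through A P)"
begin

definition pencil :: "(complex^3) set set set" where
  "pencil = lines_through A P"

definition rest :: "(complex^3) set set set" where
  "rest = A - pencil"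

lemma pencil_sub: "pencil \<subseteq> A" and P_on_pencil: "H \<in> pencil \<Longrightarrow> P \<in> H"
  and rest_sub: "rest \<subseteq> A" and P_off_rest: "H \<in> rest \<Longrightarrow> P \<notin> H"
  by (auto simp: pencil_def rest_def lines_through_def)

lemma finite_rest: "finite rest"
  using finite_A by (simp add: rest_def)

lemma card_pencil: "3 \<le> card pencil"
  using mult_pts_lines_through[OF P_mult] by (simp add: pencil_def)

lemma pencil_nonempty: "\<exists>H. H \<in> pencil"
  using card_pencil by (metis card.empty ex_in_conv not_numeral_le_zero)

lemma card_rest: "card rest = 7 - card pencil"
  using card_Diff_subset[OF finite_subset[OF pencil_sub finite_A] pencil_sub] card_A
  by (simp add: rest_def)

lemma other_point_rest_lines:
  assumes "R \<in> mult_pts A" "R \<noteq> P"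
  shows "2 \<le> card (lines_through A R \<inter> rest)"
proof -
  have "lines_through A R - lines_through A P = lines_through A R \<inter> rest"
    by (auto simp: rest_def pencil_def lines_through_def)
  then show ?thesis
    using card_lines_avoiding[OF assms(2)] mult_pts_lines_through[OF assms(1)] by simp
qed

lemma other_points_vs_pairs:
  "finite (mult_pts A - {P})" "card (mult_pts A - {P}) \<le> card rest choose 2"
proof -
  let ?pairs = "{U. U \<subseteq> rest \<and> card U = 2}"
  have fin: "finite ?pairs" using finite_rest by simp
  have witness: "\<exists>U\<in>?pairs. U \<subseteq> lines_through A R" if "R \<in> mult_pts A - {P}" for R
  proof -
    have "2 \<le> card (lines_through A R \<inter> rest)" using other_point_rest_lines that by blast
    then obtain U where "U \<subseteq> lines_through A R \<inter> rest" "card U = 2"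
      by (rule obtain_subset_with_card_n)
    then show ?thesis by blast
  qed
  have unique: "R = R'" if "R \<in> mult_pts A - {P}" "R' \<in> mult_pts A - {P}"
    and "U \<in> ?pairs" "U \<subseteq> lines_through A R" "U \<subseteq> lines_through A R'" for R R' U
  proof (rule ccontr)
    assume "R \<noteq> R'"
    have "card U \<le> card (lines_through A R \<inter> lines_through A R')"
      using that(4,5) finite_lines_through by (intro card_mono) auto
    also have "\<dots> \<le> 1" using card_common_lines[OF \<open>R \<noteq> R'\<close>] .
    finally show False using that(3) by simp
  qed
  note count = card_le_by_witnesses[of ?pairs "mult_pts A - {P}" "\<lambda>R U. U \<subseteq> lines_through A R",
      OF fin witness unique]
  from count show "finite (mult_pts A - {P})" "card (mult_pts A - {P}) \<le> card rest choose 2"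
    using n_subsets[OF finite_rest] by simp_all
qed

definition busy_pencil :: "(complex^3) set set set" where
  "busy_pencil = {H \<in> pencil. \<exists>R \<in> mult_pts A - {P}. R \<in> H}"

(* At most three lines of the pencil carry further multiple points: if the pencil has at
   least four lines, the rest has at most three, hence at most three pairs. *)
lemma card_busy_pencil: "card busy_pencil \<le> 3"
proof -
  have witness: "\<exists>R \<in> mult_pts A - {P}. R \<in> H" if "H \<in> busy_pencil" for H
    using that by (simp add: busy_pencil_def)
  have unique: "H = H'" if "H \<in> busy_pencil" "H' \<in> busy_pencil"
    and "R \<in> mult_pts A - {P}" "R \<in> H" "R \<in> H'" for H H' R
  proof (rule ccontr)
    assume "H \<noteq> H'"
    have "H \<in> pencil" "H' \<in> pencil" using that(1,2) by (simp_all add: busy_pencil_def)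
    then have "P = R" using meet_once[OF _ _ \<open>H \<noteq> H'\<close>] that(4,5) pencil_sub P_on_pencil by blast
    with that(3) show False by blast
  qed
  have "card busy_pencil \<le> card (mult_pts A - {P})"
    using card_le_by_witnesses(2)[of "mult_pts A - {P}" busy_pencil "\<lambda>H R. R \<in> H",
        OF other_points_vs_pairs(1) witness unique] .
  also have "\<dots> \<le> card rest choose 2" by (rule other_points_vs_pairs(2))
  finally have by_rest: "card busy_pencil \<le> card rest choose 2" .
  show ?thesis
  proof (cases "card pencil \<le> 3")
    case True
    have "busy_pencil \<subseteq> pencil" by (auto simp: busy_pencil_def)
    then have "card busy_pencil \<le> card pencil"
      using finite_subset[OF pencil_sub finite_A] by (rule card_mono[rotated])
    then show ?thesis using True by linarith
  next
    case False
    then have "card rest choose 2 \<le> 3 choose 2"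
      using card_rest by (intro binomial_right_mono) linarith
    also have "\<dots> = 3" by (simp add: choose_two)
    finally show ?thesis using by_rest by linarith
  qed
qed

(* Case (ii): if every multiple point lies on the pencil, three concurrent pencil lines
   containing all busy lines cover mult(A). *)
lemma concurrent_case:
  assumes "\<forall>R \<in> mult_pts A. \<exists>H \<in> pencil. R \<in> H"
  shows "C_le3_simple A"
proof -
  have "busy_pencil \<subseteq> pencil" by (auto simp: busy_pencil_def)
  then obtain B where B: "busy_pencil \<subseteq> B" "B \<subseteq> pencil" "card B = 3"
    using exists_subset_between[OF card_busy_pencil card_pencil] finite_subset[OF pencil_sub finite_A]
    by blast
  then obtain H1 H2 H3 where H: "B = {H1, H2, H3}" "H1 \<noteq> H2" "H2 \<noteq> H3" "H1 \<noteq> H3"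
    by (auto simp: card_3_iff)
  have cover: "R \<in> H1 \<union> H2 \<union> H3" if R: "R \<in> mult_pts A" for R
  proof (cases "R = P")
    case True
    then show ?thesis using H(1) B(2) P_on_pencil by blast
  next
    case False
    then obtain H where "H \<in> busy_pencil" "R \<in> H"
      using assms R by (auto simp: busy_pencil_def)
    then show ?thesis using B(1) H(1) by blast
  qed
  then have "mult_pts A \<subseteq> H1 \<union> H2 \<union> H3" by blast
  moreover have "H1 \<in> A" "H2 \<in> A" "H3 \<in> A" using H(1) B(2) pencil_sub by auto
  moreover have "P \<in> H1 \<inter> H2 \<inter> H3" using H(1) B(2) P_on_pencil by blast
  ultimately show ?thesis using C_le3_simpleI H(2-4) by (metis empty_iff)
qed

(* The remaining case: a multiple point Q on no line of the pencil.  Then all lines through Q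
   belong to the rest, which leaves at most one further line. *)
context
  fixes Q :: "(complex^3) set"
  assumes Q_mult: "Q \<in> mult_pts A" and Q_off_pencil: "\<forall>H \<in> pencil. Q \<notin> H"
begin

lemma lines_through_Q_rest: "lines_through A Q \<subseteq> rest"
  using Q_off_pencil by (auto simp: rest_def lines_through_def)

lemma count_rest_off_Q:
  "card (rest - lines_through A Q) + card (lines_through A Q) + card pencil = 7"
  "3 \<le> card (lines_through A Q)" "card (lines_through A Q) \<le> card pencil"
  using card_Diff_subset[OF finite_lines_through lines_through_Q_rest] card_rest card_pencil
    card_mono[OF finite_rest lines_through_Q_rest] mult_pts_lines_through[OF Q_mult] P_max[OF Q_mult]
  by (simp_all add: pencil_def)

lemma two_lines_through_Q:
  obtains K1 K2 where "K1 \<in> lines_through A Q" "K2 \<in> lines_through A Q" "K1 \<noteq> K2"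
proof -
  have "2 \<le> card (lines_through A Q)" using count_rest_off_Q(2) by linarith
  then obtain U where "U \<subseteq> lines_through A Q" "card U = 2" by (rule obtain_subset_with_card_n)
  then show thesis using that by (auto simp: card_2_iff)
qed

lemma third_point_off_Q_lines:
  assumes "R \<in> mult_pts A" "R \<noteq> P" "R \<noteq> Q"
  shows "\<exists>H \<in> rest - lines_through A Q. R \<in> H"
proof (rule ccontr)
  assume "\<not> ?thesis"
  then have "lines_through A R \<inter> rest \<subseteq> lines_through A R \<inter> lines_through A Q"
    by (auto simp: lines_through_def)
  then have "card (lines_through A R \<inter> rest) \<le> card (lines_through A R \<inter> lines_through A Q)"
    using finite_lines_through by (intro card_mono) auto
  then show False using other_point_rest_lines[OF assms(1,2)] card_common_lines[OF assms(3)] by linarith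
qed

(* No extra line: mult(A) = {P, Q}, covered by two lines. *)
lemma isolated_two_points:
  assumes "rest \<subseteq> lines_through A Q"
  shows "C_le3_simple A"
proof -
  have "mult_pts A \<subseteq> {P, Q}" using third_point_off_Q_lines assms by blast
  obtain HP HQ where "HP \<in> pencil" "HQ \<in> lines_through A Q"
    using pencil_nonempty two_lines_through_Q by blast
  then have "{HP, HQ} \<subseteq> A" "mult_pts A \<subseteq> \<Union>{HP, HQ}"
    using \<open>mult_pts A \<subseteq> {P, Q}\<close> pencil_sub P_on_pencil by (auto simp: lines_through_def)
  then have "arr_type A \<le> card {HP, HQ}" by (rule arr_type_le_card)
  also have "\<dots> \<le> 2" by (simp add: card_insert_if)
  finally show ?thesis by (simp add: C_le3_simple_def)
qed

(* One extra line l: all other multiple points lie on l; a pencil line H1 and a line H3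
   through Q avoiding H1 \<inter> l give configuration (i), P being the only multiple point on
   H1 outside l and H3. *)
lemma isolated_one_extra_line:
  assumes l: "rest - lines_through A Q = {l}"
  shows "C_le3_simple A"
proof -
  have l_rest: "l \<in> rest" and "l \<notin> lines_through A Q" using l by blast+
  then have Q_off_l: "Q \<notin> l" using rest_sub by (auto simp: lines_through_def)
  obtain H1 where H1: "H1 \<in> pencil" using pencil_nonempty by blast
  obtain K1 K2 where K: "K1 \<in> lines_through A Q" "K2 \<in> lines_through A Q" "K1 \<noteq> K2"
    using two_lines_through_Q by blast
  have "H1 \<noteq> l" using H1 l_rest by (auto simp: rest_def)
  moreover have "H1 \<in> A" "l \<in> A" using H1 l_rest pencil_sub rest_sub by blast+
  ultimately have "H1 \<inter> l \<inter> K1 = {} \<or> H1 \<inter> l \<inter> K2 = {}"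
    using avoid_common_point[OF K] Q_off_l by blast
  then obtain H3 where H3: "H3 \<in> lines_through A Q" "H1 \<inter> l \<inter> H3 = {}"
    using K(1,2) by blast
  have PH1: "P \<in> H1" and P_off: "P \<notin> l" "P \<notin> H3"
    using H1 P_on_pencil l_rest H3(1) lines_through_Q_rest P_off_rest by blast+
  have others: "R \<in> l" if "R \<in> mult_pts A" "R \<noteq> P" "R \<noteq> Q" for R
    using third_point_off_Q_lines[OF that] l by blast
  have "mult_pts A \<subseteq> H1 \<union> l \<union> H3" using others PH1 H3(1) by (auto simp: lines_through_def)
  moreover have "mult_pts A \<inter> (H1 - (l \<union> H3)) = {P}"
    using others P_mult PH1 P_off H3(1) by (auto simp: lines_through_def)
  moreover have "H3 \<in> A" "H1 \<noteq> H3" "l \<noteq> H3"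
    using H1 H3(1) \<open>l \<notin> lines_through A Q\<close> lines_through_Q_rest by (auto simp: rest_def lines_through_def)
  ultimately show ?thesis
    using C_le3_simpleI[of H1 A l H3] \<open>H1 \<in> A\<close> \<open>l \<in> A\<close> \<open>H1 \<noteq> l\<close> H3(2) by simp
qed

lemma isolated_case: "C_le3_simple A"
proof -
  have "card (rest - lines_through A Q) \<le> 1" using count_rest_off_Q by linarith
  then consider "rest - lines_through A Q = {}" | l where "rest - lines_through A Q = {l}"
    by (metis card_0_eq card_1_singletonE finite_Diff finite_rest le_SucE le_zero_eq One_nat_def)
  then show ?thesis
    by cases (auto intro: isolated_two_points isolated_one_extra_line)
qed

end

theorem simple_type: "C_le3_simple A"
  using concurrent_case isolated_case by blast

end

lemma line_arrangement_linear_family: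
  assumes "line_arrangement A"
  shows "linear_family A"
proof
  show "finite A" using assms by (simp add: line_arrangement_def)
  fix L1 L2 X Y
  assume "L1 \<in> A" "L2 \<in> A" "L1 \<noteq> L2" "X \<in> L1" "X \<in> L2" "Y \<in> L1" "Y \<in> L2"
  moreover have "is_proj_line L1" "is_proj_line L2"
    using assms \<open>L1 \<in> A\<close> \<open>L2 \<in> A\<close> by (auto simp: line_arrangement_def)
  ultimately show "X = Y" using proj_lines_meet_once by blast
qed

theorem mainTheorem12:
  assumes "line_arrangement A" and "card A = 7"
  shows "C_le3_simple A"
proof -
  interpret linear_family A using line_arrangement_linear_family[OF assms(1)] .
  show ?thesis
  proof (cases "mult_pts A = {}")
    case True
    then have "arr_type A \<le> card ({} :: (complex^3) set set set)"
      by (intro arr_type_le_card) auto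
    then show ?thesis by (simp add: C_le3_simple_def)
  next
    case False
    then obtain P where "P \<in> mult_pts A"
      "\<And>X. X \<in> mult_pts A \<Longrightarrow> card (lines_through A X) \<le> card (lines_through A P)"
      using exists_max_mult_point finite_A by blast
    then interpret seven_lines A P using assms(2) by unfold_locales
    show ?thesis by (rule simple_type)
  qed
qed

end
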